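(* There is an absolute constant $c>0$ such that for all integers $n\ge1$, $m\ge2$: if $X\sim\mathcal{D}^n$ and $\varepsilon_0=\sqrt{\log_2 m}/m$, then for every $x\in S^{n-1}$ and every $\varepsilon\ge\varepsilon_0$, $$\Pr[|\langle X,x\rangle|\le\varepsilon]\le c\varepsilon.$$
   Context: For an integer $m\ge1$, $\mathcal{D}$ denotes the uniform distribution on $\{a/m: a\in\{-m,\ldots,m\}\}$, and $\mathcal{D}^n$ the distribution of a random vector in $\mathbb{R}^n$ with independent $\mathcal{D}$-distributed coordinates. $S^{n-1}=\{x\in\mathbb{R}^n:\|x\|_2=1\}$. *)

theory Defs
  imports "HOL-Probability.Probability"
begin

definition D_pmf :: "nat \<Rightarrow> real pmf" where
  "D_pmf m = pmf_of_set ((\<lambda>a::int. real_of_int a / real m) ` {-int m..int m})"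

text \<open>D^n: vectors in R^n (coordinates indexed by {..<n}, default 0 elsewhere)
  with independent D-distributed coordinates.\<close>
definition Dn_pmf :: "nat \<Rightarrow> nat \<Rightarrow> (nat \<Rightarrow> real) pmf" where
  "Dn_pmf n m = Pi_pmf {..<n} 0 (\<lambda>_. D_pmf m)"

end

theory Submission
  imports Defs
begin

(*
  Write S = sum_i X_i x_i. If some coordinate has x_j^2 > 1/2, condition on the other
  coordinates: X_j is uniform on a grid of mesh 1/m, so the window |S| <= eps catches at most
  2 eps m / |x_j| + 1 of its 2m + 1 values.

  Otherwise we follow Halasz. For N ~ 1/eps the trigonometric polynomial
  |sum_{j<N} exp(i j s)|^2 is at least N^2/4 on |s| <= eps, hence
  P(|S| <= eps) <= 4/N^2 sum_{j,l<N} E cos((j - l) S), and E cos(t S) = prod_i phi(t x_i)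
  where phi is the characteristic function of D. Weighted AM-GM with weights x_i^2 reduces
  sum_{d<N} prod_i |phi(d x_i)| to the one-dimensional sums sum_{d<N} |phi(d y)| powr (1/y^2),
  which are bounded by an absolute constant because |phi(u)| <= exp(-u^2/9) for |u| <= 3/2
  and, by the Dirichlet kernel, |phi(u)| <= 21/(20|u|) for 0 < |u| <= m. Altogether
  P(|S| <= eps) = O(1/N) = O(eps).

  The hypothesis eps >= sqrt(log_2 m)/m is only used through eps >= 1/m, which gives N <= m.
*)

section \<open>Elementary trigonometric estimates\<close>

lemma cos_ge_one_minus_sq_half: "1 - x\<^sup>2 / 2 \<le> cos (x::real)"
proof -
  have nonneg: "1 - t\<^sup>2 / 2 \<le> cos t" if "0 \<le> t" for t :: real
  proof -
    have "(\<lambda>t. cos t - 1 + t\<^sup>2 / 2) 0 \<le> (\<lambda>t. cos t - 1 + t\<^sup>2 / 2) t"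
    proof (rule DERIV_nonneg_imp_nondecreasing[OF that])
      fix s :: real assume "0 \<le> s"
      then show "\<exists>y. ((\<lambda>t. cos t - 1 + t\<^sup>2 / 2) has_real_derivative y) (at s) \<and> 0 \<le> y"
        by (intro exI[of _ "s - sin s"]) (auto intro!: derivative_eq_intros simp: sin_x_le_x)
    qed
    then show ?thesis by simp
  qed
  show ?thesis using nonneg[of "\<bar>x\<bar>"] by (cases "x \<ge> 0") auto
qed

lemma sin_ge_cubic: assumes "0 \<le> x" shows "x - x ^ 3 / 6 \<le> sin (x::real)"
proof -
  have "(\<lambda>t. sin t - t + t ^ 3 / 6) 0 \<le> (\<lambda>t. sin t - t + t ^ 3 / 6) x"
  proof (rule DERIV_nonneg_imp_nondecreasing[OF assms])
    fix s :: real
    show "\<exists>y. ((\<lambda>t. sin t - t + t ^ 3 / 6) has_real_derivative y) (at s) \<and> 0 \<le> y"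
      using cos_ge_one_minus_sq_half[of s]
      by (intro exI[of _ "cos s - 1 + s\<^sup>2 / 2"]) (auto intro!: derivative_eq_intros)
  qed
  then show ?thesis by simp
qed

lemma cos_le_quartic: "cos (x::real) \<le> 1 - x\<^sup>2 / 2 + x ^ 4 / 24"
proof -
  have nonneg: "cos t \<le> 1 - t\<^sup>2 / 2 + t ^ 4 / 24" if "0 \<le> t" for t :: real
  proof -
    have "(\<lambda>t. 1 - t\<^sup>2 / 2 + t ^ 4 / 24 - cos t) 0 \<le> (\<lambda>t. 1 - t\<^sup>2 / 2 + t ^ 4 / 24 - cos t) t"
    proof (rule DERIV_nonneg_imp_nondecreasing[OF that])
      fix s :: real assume "0 \<le> s"
      then show "\<exists>y. ((\<lambda>t. 1 - t\<^sup>2 / 2 + t ^ 4 / 24 - cos t) has_real_derivative y) (at s) \<and> 0 \<le> y"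
        using sin_ge_cubic[of s]
        by (intro exI[of _ "sin s - s + s ^ 3 / 6"]) (auto intro!: derivative_eq_intros)
    qed
    then show ?thesis by simp
  qed
  show ?thesis using nonneg[of "\<bar>x\<bar>"] by (cases "x \<ge> 0") auto
qed

lemma cos_le_one_minus_sq_third:
  assumes "\<bar>x\<bar> \<le> 3 / 2"
  shows "cos (x::real) \<le> 1 - x\<^sup>2 / 3"
proof -
  have "\<bar>x\<bar>\<^sup>2 \<le> (3 / 2)\<^sup>2"
    using assms by (intro power_mono) auto
  then have "x\<^sup>2 \<le> 9 / 4"
    by (simp add: power2_eq_square)
  then have "x\<^sup>2 * x\<^sup>2 \<le> 9 / 4 * x\<^sup>2"
    by (intro mult_right_mono) simp_all
  then have "x ^ 4 \<le> 9 / 4 * x\<^sup>2"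
    by (simp add: power4_eq_xxxx power2_eq_square)
  then show ?thesis using cos_le_quartic[of x] zero_le_power2[of x] by linarith
qed

lemma atLeastAtMost_minus_Suc:
  "{-int (Suc m)..int (Suc m)} = insert (int m + 1) (insert (- (int m + 1)) {-int m..int m})"
  by auto

lemma sum_squares_symmetric_range:
  "(\<Sum>a\<in>{-int m..int m}. (real_of_int a)\<^sup>2) = real m * (real m + 1) * (2 * real m + 1) / 3"
proof (induction m)
  case (Suc m)
  then show ?case unfolding atLeastAtMost_minus_Suc by (simp add: algebra_simps power2_eq_square)
qed simp

lemma sum_sin_symmetric_range: "(\<Sum>a\<in>{-int m..int m}. sin (real_of_int a * t)) = 0"
proof (induction m)
  case (Suc m)
  have "sin (- t - t * real m) = - sin (t + t * real m)"
    using sin_minus[of "t + t * real m"] by simp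
  with Suc show ?case unfolding atLeastAtMost_minus_Suc by (simp add: algebra_simps)
qed simp

lemma Dirichlet_kernel:
  "sin (t / 2) * (\<Sum>a\<in>{-int m..int m}. cos (real_of_int a * t)) = sin ((real m + 1 / 2) * t)"
proof (induction m)
  case (Suc m)
  have "cos (- t - t * real m) = cos (t + t * real m)"
    using cos_minus[of "t + t * real m"] by simp
  then have "sin (t / 2) * (\<Sum>a\<in>{-int (Suc m)..int (Suc m)}. cos (real_of_int a * t))
      = sin ((real m + 1 / 2) * t) + 2 * sin (t / 2) * cos ((real m + 1) * t)"
    using Suc unfolding atLeastAtMost_minus_Suc by (simp add: algebra_simps)
  also have "\<dots> = sin ((real (Suc m) + 1 / 2) * t)"
    using sin_add[of "(real m + 1) * t" "t / 2"] sin_diff[of "(real m + 1) * t" "t / 2"]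
    by (simp add: algebra_simps)
  finally show ?case .
qed simp

section \<open>The characteristic function of D\<close>

definition D_charfun :: "nat \<Rightarrow> real \<Rightarrow> real" where
  "D_charfun m u = (\<Sum>a\<in>{-int m..int m}. cos (real_of_int a * (u / real m))) / (2 * real m + 1)"

lemma D_charfun_minus: "D_charfun m (- u) = D_charfun m u"
  unfolding D_charfun_def by (simp add: minus_divide_left[symmetric] del: minus_divide_left)

lemma D_charfun_0: "D_charfun m 0 = 1"
  unfolding D_charfun_def by simp

lemma D_charfun_le_exp:
  assumes "m \<ge> 1" and "\<bar>u\<bar> \<le> 3 / 2"
  shows "0 \<le> D_charfun m u" and "D_charfun m u \<le> exp (- (u\<^sup>2 / 9))"
proof -
  define M where "M = real m"
  have M: "M > 0" using assms(1) unfolding M_def by simp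
  have angle: "\<bar>real_of_int a * (u / M)\<bar> \<le> 3 / 2" if "a \<in> {-int m..int m}" for a
  proof -
    have "\<bar>real_of_int a\<bar> * \<bar>u\<bar> \<le> M * (3 / 2)"
      using that assms(2) unfolding M_def by (intro mult_mono) auto
    then show ?thesis using M by (simp add: abs_mult abs_divide field_simps)
  qed
  define S where "S = (\<Sum>a\<in>{-int m..int m}. cos (real_of_int a * (u / M)))"
  have charfun: "D_charfun m u = S / (2 * M + 1)" unfolding D_charfun_def S_def M_def ..
  have "S \<le> (\<Sum>a\<in>{-int m..int m}. 1 - (real_of_int a)\<^sup>2 * (u\<^sup>2 / (3 * M\<^sup>2)))"
    unfolding S_def using cos_le_one_minus_sq_third[OF angle]
    by (intro sum_mono) (simp add: power_mult_distrib power_divide mult.commute)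
  also have "\<dots> = (2 * M + 1) - (\<Sum>a\<in>{-int m..int m}. (real_of_int a)\<^sup>2) * (u\<^sup>2 / (3 * M\<^sup>2))"
    by (simp add: sum_subtractf sum_distrib_right sum_divide_distrib M_def)
  also have "\<dots> = (2 * M + 1) - M * (M + 1) * (2 * M + 1) / 3 * (u\<^sup>2 / (3 * M\<^sup>2))"
    unfolding sum_squares_symmetric_range M_def ..
  also have "\<dots> = (2 * M + 1) * (1 - u\<^sup>2 / 9 * ((M + 1) / M))"
    using M by (simp add: field_simps power2_eq_square)
  also have "\<dots> \<le> (2 * M + 1) * (1 - u\<^sup>2 / 9)"
    using M by (intro mult_left_mono) (auto simp: field_simps)
  finally have "D_charfun m u \<le> 1 - u\<^sup>2 / 9"
    unfolding charfun using M by (simp add: divide_le_eq mult.commute)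
  also have "\<dots> \<le> exp (- (u\<^sup>2 / 9))"
    using exp_ge_add_one_self[of "- (u\<^sup>2 / 9)"] by simp
  finally show "D_charfun m u \<le> exp (- (u\<^sup>2 / 9))" .
  have "0 \<le> cos (real_of_int a * (u / M))" if "a \<in> {-int m..int m}" for a
  proof -
    have "\<bar>real_of_int a * (u / M)\<bar> \<le> pi / 2"
      using angle[OF that] pi_gt3 by linarith
    then show ?thesis
      by (intro cos_ge_zero) (auto simp only: abs_le_iff)
  qed
  then have "0 \<le> S"
    unfolding S_def by (intro sum_nonneg)
  then show "0 \<le> D_charfun m u" unfolding charfun using M by simp
qed

lemma abs_D_charfun_le_inverse:
  assumes "m \<ge> 1" and "u \<noteq> 0" and "\<bar>u\<bar> \<le> real m"
  shows "\<bar>D_charfun m u\<bar> \<le> 21 / (20 * \<bar>u\<bar>)"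
proof -
  define M where "M = real m"
  have M: "M > 0" using assms(1) unfolding M_def by simp
  define x where "x = \<bar>u\<bar> / (2 * M)"
  have x: "0 < x" "x \<le> 1 / 2" using assms M unfolding x_def M_def by (auto simp: field_simps)
  have "x * x \<le> 1 / 2 * (1 / 2)"
    using x by (intro mult_mono) auto
  then have "x ^ 3 \<le> x * (1 / 2)\<^sup>2"
    using x by (simp add: power3_eq_cube power2_eq_square mult_left_mono)
  then have sin_x: "23 / 24 * x \<le> sin x"
    using sin_ge_cubic[of x] x by (simp add: power2_eq_square)
  define S where "S = (\<Sum>a\<in>{-int m..int m}. cos (real_of_int a * (\<bar>u\<bar> / M)))"
  have "\<bar>u\<bar> = u \<or> \<bar>u\<bar> = - u" by linarith
  then have charfun: "D_charfun m u = S / (2 * M + 1)"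
    using D_charfun_minus[of m u] unfolding D_charfun_def S_def M_def by auto
  have "sin x * S = sin ((M + 1 / 2) * (\<bar>u\<bar> / M))"
    using Dirichlet_kernel[of "\<bar>u\<bar> / M" m] unfolding x_def S_def M_def by (simp add: field_simps)
  moreover have sin_pos: "0 < sin x"
    using sin_x x by linarith
  ultimately have "sin x * \<bar>S\<bar> \<le> 1"
    by (metis abs_mult abs_of_pos abs_sin_le_one)
  then have "\<bar>S\<bar> \<le> 1 / sin x"
    using sin_pos by (simp add: field_simps)
  also have "\<dots> \<le> 1 / (23 / 24 * x)"
    using sin_x x by (intro divide_left_mono) auto
  also have "\<dots> = 48 * M / (23 * \<bar>u\<bar>)"
    unfolding x_def using M by simp
  finally have S_le: "\<bar>S\<bar> \<le> 48 * M / (23 * \<bar>u\<bar>)" .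
  have "\<bar>D_charfun m u\<bar> = \<bar>S\<bar> / (2 * M + 1)"
    unfolding charfun using M by (simp add: abs_divide)
  also have "\<dots> \<le> 48 * M / (23 * \<bar>u\<bar>) / (2 * M + 1)"
    using S_le M by (intro divide_right_mono) auto
  also have "\<dots> = 48 * M / (2 * M + 1) / (23 * \<bar>u\<bar>)"
    by simp
  also have "\<dots> \<le> 24 / (23 * \<bar>u\<bar>)"
    using M by (intro divide_right_mono) (auto simp: field_simps)
  also have "\<dots> \<le> 21 / (20 * \<bar>u\<bar>)"
    using assms(2) by (simp add: field_simps)
  finally show ?thesis .
qed

section \<open>Summing the characteristic function over frequencies\<close>

lemma sum_exp_neg_div_9_le: "(\<Sum>d<N. exp (- (real d / 9))) \<le> 10"
proof -
  define q where "q = exp (- (1 / 9 :: real))"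
  have "exp (1 / 9 :: real) \<ge> 1 + 1 / 9"
    using exp_ge_add_one_self[of "1 / 9 :: real"] by simp
  then have q: "0 < q" "q \<le> 9 / 10"
    unfolding q_def by (simp_all add: exp_minus field_simps)
  have "(\<Sum>d<N. exp (- (real d / 9))) = (\<Sum>d<N. q ^ d)"
    unfolding q_def by (simp add: exp_of_nat_mult[symmetric])
  also have "\<dots> = (1 - q ^ N) / (1 - q)"
    using q by (simp add: sum_gp_strict)
  also have "\<dots> \<le> 1 / (1 - q)"
    using q by (intro divide_right_mono) auto
  also have "\<dots> \<le> 10"
    using q by (simp add: field_simps)
  finally show ?thesis .
qed

lemma sum_inverse_squares_le: "(\<Sum>d\<in>{2..<N}. 1 / (real d)\<^sup>2) \<le> 1"
proof -
  have telescope: "(\<Sum>d\<in>{2..<N}. 1 / (real d)\<^sup>2) \<le> 1 - 1 / (real N - 1)" if "N \<ge> 2" for N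
    using that
  proof (induction N rule: dec_induct)
    case (step N)
    have "1 / (real N)\<^sup>2 \<le> 1 / (real N - 1) - 1 / real N"
      using step.hyps by (simp add: field_simps power2_eq_square)
    with step.IH step.hyps show ?case by simp
  qed simp
  show ?thesis
  proof (cases "N \<ge> 2")
    case True
    then have "0 \<le> 1 / (real N - 1)"
      by simp
    then show ?thesis using telescope[OF True] by linarith
  qed simp
qed

lemma seven_tenths_powr_mult_le:
  assumes "2 \<le> p"
  shows "(7 / 10 :: real) powr (p - 2) * p \<le> 10 / 3"
proof -
  have "ln (7 / 10 :: real) \<le> - 3 / 10"
    using ln_le_minus_one[of "7 / 10 :: real"] by simp
  then have "(p - 2) * ln (7 / 10) \<le> (p - 2) * (- 3 / 10)"
    using assms by (intro mult_left_mono) auto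
  then have "(7 / 10 :: real) powr (p - 2) \<le> exp (- (3 / 10 * (p - 2)))"
    unfolding powr_def by (simp add: mult.commute)
  also have "\<dots> = 1 / exp (3 / 10 * (p - 2))"
    by (simp add: exp_minus field_simps)
  also have "\<dots> \<le> 1 / (1 + 3 / 10 * (p - 2))"
    using exp_ge_add_one_self[of "3 / 10 * (p - 2)"] assms by (intro divide_left_mono mult_pos_pos) (auto simp: field_simps)
  finally have "(7 / 10 :: real) powr (p - 2) * p \<le> 1 / (1 + 3 / 10 * (p - 2)) * p"
    using assms by (intro mult_right_mono) auto
  also have "\<dots> \<le> 10 / 3"
    using assms by (simp add: field_simps)
  finally show ?thesis .
qed

lemma abs_D_charfun_powr_le_exp:
  assumes "m \<ge> 1" and "y \<noteq> 0" and "\<bar>real d * y\<bar> \<le> 3 / 2"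
  shows "\<bar>D_charfun m (real d * y)\<bar> powr (1 / y\<^sup>2) \<le> exp (- (real d / 9))"
proof -
  have "\<bar>D_charfun m (real d * y)\<bar> powr (1 / y\<^sup>2) \<le> exp (- ((real d * y)\<^sup>2 / 9)) powr (1 / y\<^sup>2)"
    using D_charfun_le_exp[OF assms(1,3)] by (intro powr_mono2) auto
  also have "\<dots> = exp (- ((real d)\<^sup>2 / 9))"
    using assms(2) by (simp add: powr_def power_mult_distrib)
  also have "\<dots> \<le> exp (- (real d / 9))"
  proof -
    have "d \<le> d\<^sup>2"
      using le_square[of d] by (simp add: power2_eq_square)
    then have "real d \<le> (real d)\<^sup>2"
      by (metis of_nat_le_iff of_nat_power)
    then show ?thesis
      by simp
  qed
  finally show ?thesis .
qed

lemma abs_D_charfun_powr_le_inverse_square: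
  assumes "m \<ge> 1" and "y\<^sup>2 \<le> 1 / 2" and "3 / 2 < \<bar>real d * y\<bar>" and "d \<le> m"
  shows "\<bar>D_charfun m (real d * y)\<bar> powr (1 / y\<^sup>2)
    \<le> (21 / 20)\<^sup>2 * ((7 / 10) powr (1 / y\<^sup>2 - 2) * (1 / y\<^sup>2)) / (real d)\<^sup>2"
proof -
  define c where "c = \<bar>D_charfun m (real d * y)\<bar>"
  define p where "p = 1 / y\<^sup>2"
  have y: "y \<noteq> 0" "\<bar>y\<bar> \<le> 1"
    using assms(2,3) abs_le_square_iff[of y 1] by auto
  have p: "p \<ge> 2"
    using assms(2) y unfolding p_def by (simp add: field_simps)
  have d: "real d > 0"
    using assms(3) by (cases d) auto
  have "\<bar>real d * y\<bar> = real d * \<bar>y\<bar>"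
    by (simp add: abs_mult)
  also have "\<dots> \<le> real m"
    using y assms(4) by (intro order_trans[OF mult_left_le]) auto
  finally have c_le: "c \<le> 21 / (20 * \<bar>real d * y\<bar>)"
    unfolding c_def using abs_D_charfun_le_inverse[OF assms(1)] d y by simp
  also have "\<dots> \<le> 7 / 10"
    using assms(3) by (simp add: divide_le_eq)
  finally have c_small: "c \<le> 7 / 10" .
  show ?thesis
  proof (cases "c = 0")
    case False
    then have "c > 0" unfolding c_def by simp
    have "c powr p = c powr 2 * c powr (p - 2)"
      by (simp add: powr_add[symmetric])
    also have "\<dots> = c\<^sup>2 * c powr (p - 2)"
      using \<open>c > 0\<close> by (simp add: powr_numeral)
    also have "\<dots> \<le> (21 / (20 * \<bar>real d * y\<bar>))\<^sup>2 * (7 / 10) powr (p - 2)"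
      using c_le c_small \<open>c > 0\<close> p by (intro mult_mono power_mono powr_mono2) auto
    also have "(21 / (20 * \<bar>real d * y\<bar>))\<^sup>2 = (21 / 20)\<^sup>2 * p / (real d)\<^sup>2"
      unfolding p_def by (simp add: power_divide power_mult_distrib)
    finally show ?thesis
      unfolding c_def p_def by (simp add: mult_ac)
  qed (use p in \<open>simp add: c_def p_def\<close>)
qed

lemma sum_abs_D_charfun_powr_le:
  assumes "m \<ge> 1" and "y \<noteq> 0" and "y\<^sup>2 \<le> 1 / 2" and "N \<le> m"
  shows "(\<Sum>d<N. \<bar>D_charfun m (real d * y)\<bar> powr (1 / y\<^sup>2)) \<le> 15"
proof -
  define C where "C = (21 / 20)\<^sup>2 * ((7 / 10) powr (1 / y\<^sup>2 - 2) * (1 / y\<^sup>2))"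
  have "2 \<le> 1 / y\<^sup>2"
    using assms(2,3) by (simp add: field_simps)
  then have "C \<le> (21 / 20)\<^sup>2 * (10 / 3)"
    unfolding C_def by (intro mult_left_mono seven_tenths_powr_mult_le) simp_all
  moreover have "0 \<le> C"
    unfolding C_def by simp
  ultimately have C: "0 \<le> C" "C \<le> (21 / 20)\<^sup>2 * (10 / 3)"
    by simp_all
  have term_le: "\<bar>D_charfun m (real d * y)\<bar> powr (1 / y\<^sup>2)
      \<le> exp (- (real d / 9)) + (if d \<in> {2..<N} then C / (real d)\<^sup>2 else 0)" if "d < N" for d
  proof (cases "\<bar>real d * y\<bar> \<le> 3 / 2")
    case True
    have "0 \<le> (if d \<in> {2..<N} then C / (real d)\<^sup>2 else 0)"
      using C by simp
    then show ?thesis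
      using abs_D_charfun_powr_le_exp[OF assms(1,2) True] by linarith
  next
    case False
    moreover have "\<bar>y\<bar> \<le> 1"
      using assms(3) abs_le_square_iff[of y 1] by auto
    then have "\<bar>real d * y\<bar> \<le> 1" if "d \<le> 1"
      using that by (simp add: abs_mult mult_le_one)
    ultimately have "d \<ge> 2"
      by force
    then show ?thesis
      using abs_D_charfun_powr_le_inverse_square[OF assms(1,3)] False that assms(4)
      unfolding C_def by (auto intro: add_increasing)
  qed
  have "(\<Sum>d<N. \<bar>D_charfun m (real d * y)\<bar> powr (1 / y\<^sup>2))
      \<le> (\<Sum>d<N. exp (- (real d / 9)) + (if d \<in> {2..<N} then C / (real d)\<^sup>2 else 0))"
    using term_le by (intro sum_mono) simp
  also have "\<dots> = (\<Sum>d<N. exp (- (real d / 9))) + (\<Sum>d\<in>{2..<N}. C / (real d)\<^sup>2)"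
    by (simp only: sum.distrib sum.inter_restrict[OF finite_lessThan, symmetric]) (simp add: Int_absorb1 subset_iff)
  also have "\<dots> = (\<Sum>d<N. exp (- (real d / 9))) + C * (\<Sum>d\<in>{2..<N}. 1 / (real d)\<^sup>2)"
    by (simp add: sum_distrib_left)
  also have "\<dots> \<le> 10 + C * 1"
    using sum_exp_neg_div_9_le[of N] sum_inverse_squares_le[of N] C
    by (intro add_mono mult_left_mono) auto
  also have "\<dots> \<le> 15"
    using C by (simp add: power2_eq_square)
  finally show ?thesis .
qed

lemma prod_le_weighted_sum_powr:
  fixes a w :: "'i \<Rightarrow> real"
  assumes "finite I" and w_pos: "\<And>i. i \<in> I \<Longrightarrow> 0 < w i" and "(\<Sum>i\<in>I. w i) = 1"
    and a_nonneg: "\<And>i. i \<in> I \<Longrightarrow> 0 \<le> a i"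
  shows "(\<Prod>i\<in>I. a i) \<le> (\<Sum>i\<in>I. w i * a i powr (1 / w i))"
proof (cases "\<exists>i\<in>I. a i = 0")
  case True
  then have "(\<Prod>i\<in>I. a i) = 0"
    using assms(1) by simp
  moreover have "0 \<le> (\<Sum>i\<in>I. w i * a i powr (1 / w i))"
    using w_pos by (intro sum_nonneg mult_nonneg_nonneg) (auto simp: less_imp_le)
  ultimately show ?thesis
    by simp
next
  case False
  with a_nonneg have a_pos: "\<And>i. i \<in> I \<Longrightarrow> 0 < a i"
    by force
  have "I \<noteq> {}"
    using assms(3) by auto
  have "(\<Prod>i\<in>I. a i) = (\<Prod>i\<in>I. exp (ln (a i)))"
    using a_pos by simp
  also have "\<dots> = exp (\<Sum>i\<in>I. w i *\<^sub>R (ln (a i) / w i))"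
    using w_pos by (simp add: exp_sum[OF assms(1)] less_imp_neq[symmetric])
  also have "\<dots> \<le> (\<Sum>i\<in>I. w i * exp (ln (a i) / w i))"
    using assms(1,3) \<open>I \<noteq> {}\<close> w_pos
    by (intro convex_on_sum[OF _ _ exp_convex]) (auto simp: less_imp_le)
  also have "\<dots> = (\<Sum>i\<in>I. w i * a i powr (1 / w i))"
  proof (intro sum.cong refl)
    fix i assume "i \<in> I"
    then show "w i * exp (ln (a i) / w i) = w i * a i powr (1 / w i)"
      using a_pos[of i] by (simp add: powr_def)
  qed
  finally show ?thesis .
qed

lemma sum_prod_abs_D_charfun_le:
  fixes n :: nat
  assumes "m \<ge> 1" and unit: "(\<Sum>i<n. (x i)\<^sup>2) = 1"
    and small: "\<And>i. i < n \<Longrightarrow> (x i)\<^sup>2 \<le> 1 / 2"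
    and "N \<le> m"
  shows "(\<Sum>d<N. \<Prod>i<n. \<bar>D_charfun m (real d * x i)\<bar>) \<le> 15"
proof -
  define I where "I = {..<n} \<inter> {i. x i \<noteq> 0}"
  have I: "finite I" "I \<subseteq> {..<n}"
    unfolding I_def by auto
  have "(\<Sum>i<n. (x i)\<^sup>2) = (\<Sum>i\<in>I. (x i)\<^sup>2)"
    by (intro sum.mono_neutral_right I) (auto simp: I_def)
  with unit have "(\<Sum>i\<in>I. (x i)\<^sup>2) = 1"
    by simp
  then have "(\<Sum>d<N. \<Prod>i<n. \<bar>D_charfun m (real d * x i)\<bar>)
      \<le> (\<Sum>d<N. \<Sum>i\<in>I. (x i)\<^sup>2 * \<bar>D_charfun m (real d * x i)\<bar> powr (1 / (x i)\<^sup>2))"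
    using I by (intro sum_mono)
      (auto simp: prod.mono_neutral_right[of "{..<n}" I] I_def D_charfun_0
            intro!: prod_le_weighted_sum_powr)
  also have "\<dots> = (\<Sum>i\<in>I. (x i)\<^sup>2 * (\<Sum>d<N. \<bar>D_charfun m (real d * x i)\<bar> powr (1 / (x i)\<^sup>2)))"
    by (subst sum.swap) (simp add: sum_distrib_left)
  also have "\<dots> \<le> (\<Sum>i\<in>I. (x i)\<^sup>2 * 15)"
    using assms(1,4) small
    by (intro sum_mono mult_left_mono sum_abs_D_charfun_powr_le) (auto simp: I_def)
  also have "\<dots> = 15"
    using \<open>(\<Sum>i\<in>I. (x i)\<^sup>2) = 1\<close> by (simp add: sum_distrib_right[symmetric])
  finally show ?thesis .
qed

section \<open>Counting model of D^n\<close>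

definition D_support :: "nat \<Rightarrow> real set" where
  "D_support m = (\<lambda>a::int. real_of_int a / real m) ` {-int m..int m}"

definition Dn_support :: "nat \<Rightarrow> nat \<Rightarrow> (nat \<Rightarrow> real) set" where
  "Dn_support n m = PiE_dflt {..<n} 0 (\<lambda>_. D_support m)"

lemma finite_D_support [simp]: "finite (D_support m)"
  unfolding D_support_def by simp

lemma card_D_support: "m \<ge> 1 \<Longrightarrow> card (D_support m) = 2 * m + 1"
  unfolding D_support_def by (subst card_image) (auto simp: inj_on_def)

lemma finite_Dn_support [simp]: "finite (Dn_support n m)"
  unfolding Dn_support_def by auto

lemma card_Dn_support: "card (Dn_support n m) = card (D_support m) ^ n"
  unfolding Dn_support_def by (simp add: card_PiE_dflt)

lemma prob_Dn_pmf:
  "measure_pmf.prob (Dn_pmf n m) E = card (Dn_support n m \<inter> E) / card (Dn_support n m)"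
proof -
  have "Dn_pmf n m = pmf_of_set (Dn_support n m)"
    unfolding Dn_pmf_def D_pmf_def Dn_support_def D_support_def by (rule Pi_pmf_of_set) auto
  moreover have "Dn_support n m \<noteq> {}"
    unfolding Dn_support_def D_support_def by simp
  ultimately show ?thesis
    by (simp add: measure_pmf_of_set)
qed

lemma sum_cis_D_support:
  assumes "m \<ge> 1"
  shows "(\<Sum>v\<in>D_support m. cis (v * t)) = complex_of_real ((2 * real m + 1) * D_charfun m t)"
proof -
  have "(\<Sum>v\<in>D_support m. cis (v * t)) = (\<Sum>a\<in>{-int m..int m}. cis (real_of_int a * (t / real m)))"
    unfolding D_support_def using assms by (subst sum.reindex) (auto simp: inj_on_def)
  also have "\<dots> = complex_of_real (\<Sum>a\<in>{-int m..int m}. cos (real_of_int a * (t / real m)))"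
    using sum_sin_symmetric_range[where m = m and t = "t / real m"]
    by (intro complex_eqI) (simp_all add: Re_sum Im_sum)
  finally show ?thesis
    unfolding D_charfun_def by simp
qed

lemma sum_prod_PiE_dflt:
  fixes f :: "'a \<Rightarrow> 'b \<Rightarrow> 'c :: comm_semiring_1"
  assumes "finite A" and "\<And>x. x \<in> A \<Longrightarrow> finite (B x)"
  shows "(\<Sum>g\<in>PiE_dflt A d B. \<Prod>i\<in>A. f i (g i)) = (\<Prod>i\<in>A. \<Sum>v\<in>B i. f i v)"
proof -
  have "(\<Prod>i\<in>A. \<Sum>v\<in>B i. f i v) = (\<Sum>g\<in>(\<lambda>h. restrict h A) ` PiE_dflt A d B. \<Prod>i\<in>A. f i (g i))"
    unfolding restrict_PiE_dflt by (rule prod_sum_PiE[OF assms])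
  also have "\<dots> = (\<Sum>g\<in>PiE_dflt A d B. \<Prod>i\<in>A. f i (g i))"
    by (subst sum.reindex) (force simp: inj_on_def restrict_def fun_eq_iff PiE_dflt_def, simp)
  finally show ?thesis ..
qed

lemma sum_cos_Dn_support:
  assumes "m \<ge> 1"
  shows "(\<Sum>g\<in>Dn_support n m. cos (t * (\<Sum>i<n. g i * x i)))
    = (2 * real m + 1) ^ n * (\<Prod>i<n. D_charfun m (t * x i))"
proof -
  have cis_sum: "cis (\<Sum>i\<in>A. f i) = (\<Prod>i\<in>A. cis (f i))" if "finite A" for A and f :: "nat \<Rightarrow> real"
    using that by induction (simp_all add: cis_mult[symmetric])
  have "(\<Sum>g\<in>Dn_support n m. cis (t * (\<Sum>i<n. g i * x i)))
      = (\<Sum>g\<in>Dn_support n m. \<Prod>i<n. cis (g i * (t * x i)))"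
    by (simp add: sum_distrib_left cis_sum mult_ac)
  also have "\<dots> = (\<Prod>i<n. \<Sum>v\<in>D_support m. cis (v * (t * x i)))"
    unfolding Dn_support_def by (rule sum_prod_PiE_dflt) auto
  also have "\<dots> = complex_of_real ((2 * real m + 1) ^ n * (\<Prod>i<n. D_charfun m (t * x i)))"
    by (simp add: sum_cis_D_support[OF assms] prod.distrib)
  finally have "Re (\<Sum>g\<in>Dn_support n m. cis (t * (\<Sum>i<n. g i * x i)))
      = (2 * real m + 1) ^ n * (\<Prod>i<n. D_charfun m (t * x i))"
    by (simp only: Re_complex_of_real)
  then show ?thesis
    by (simp add: Re_sum)
qed

section \<open>Halasz's inequality\<close>

lemma sum_cos_sq_plus_sum_sin_sq:
  "(\<Sum>j<N. cos (real j * s))\<^sup>2 + (\<Sum>j<N. sin (real j * s))\<^sup>2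
    = (\<Sum>j<N. \<Sum>l<N. cos ((real j - real l) * s))"
  by (simp add: power2_eq_square sum_product left_diff_distrib cos_diff sum.distrib)

lemma sum_cos_sq_plus_sum_sin_sq_ge:
  assumes "\<bar>s\<bar> \<le> \<epsilon>" and "real N * \<epsilon> \<le> 1"
  shows "(real N)\<^sup>2 / 4 \<le> (\<Sum>j<N. cos (real j * s))\<^sup>2 + (\<Sum>j<N. sin (real j * s))\<^sup>2"
proof -
  have "1 / 2 \<le> cos (real j * s)" if "j < N" for j
  proof -
    have "\<bar>real j * s\<bar> \<le> real N * \<epsilon>"
      unfolding abs_mult using that assms(1) by (intro mult_mono) auto
    then have "(real j * s)\<^sup>2 \<le> 1"
      using assms(2) by (simp add: abs_square_le_1)
    then show ?thesis
      using cos_ge_one_minus_sq_half[of "real j * s"] by simp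
  qed
  then have "(\<Sum>j<N. 1 / 2) \<le> (\<Sum>j<N. cos (real j * s))"
    by (intro sum_mono) auto
  then have "real N / 2 \<le> (\<Sum>j<N. cos (real j * s))"
    by simp
  then have "(real N / 2)\<^sup>2 \<le> (\<Sum>j<N. cos (real j * s))\<^sup>2"
    by (intro power_mono) auto
  then show ?thesis
    by (simp add: power_divide add_increasing2)
qed

lemma card_abs_le_Halasz:
  fixes S :: "'a \<Rightarrow> real"
  assumes "finite \<Omega>" and "N > 0" and "real N * \<epsilon> \<le> 1"
  shows "real (card (\<Omega> \<inter> {\<omega>. \<bar>S \<omega>\<bar> \<le> \<epsilon>}))
    \<le> 4 / (real N)\<^sup>2 * (\<Sum>j<N. \<Sum>l<N. \<Sum>\<omega>\<in>\<Omega>. cos ((real j - real l) * S \<omega>))"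
proof -
  define F where "F s = (\<Sum>j<N. cos (real j * s))\<^sup>2 + (\<Sum>j<N. sin (real j * s))\<^sup>2" for s
  have "real (card (\<Omega> \<inter> {\<omega>. \<bar>S \<omega>\<bar> \<le> \<epsilon>})) = (\<Sum>\<omega>\<in>\<Omega> \<inter> {\<omega>. \<bar>S \<omega>\<bar> \<le> \<epsilon>}. 1)"
    by simp
  also have "\<dots> \<le> (\<Sum>\<omega>\<in>\<Omega> \<inter> {\<omega>. \<bar>S \<omega>\<bar> \<le> \<epsilon>}. 4 / (real N)\<^sup>2 * F (S \<omega>))"
  proof (intro sum_mono)
    fix \<omega> assume "\<omega> \<in> \<Omega> \<inter> {\<omega>. \<bar>S \<omega>\<bar> \<le> \<epsilon>}"
    then have "(real N)\<^sup>2 / 4 \<le> F (S \<omega>)"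
      unfolding F_def by (intro sum_cos_sq_plus_sum_sin_sq_ge[OF _ assms(3)]) auto
    then have "4 / (real N)\<^sup>2 * ((real N)\<^sup>2 / 4) \<le> 4 / (real N)\<^sup>2 * F (S \<omega>)"
      by (rule mult_left_mono) simp
    then show "1 \<le> 4 / (real N)\<^sup>2 * F (S \<omega>)"
      using assms(2) by simp
  qed
  also have "\<dots> \<le> (\<Sum>\<omega>\<in>\<Omega>. 4 / (real N)\<^sup>2 * F (S \<omega>))"
    using assms(1) by (intro sum_mono2) (auto simp: F_def)
  also have "\<dots> = 4 / (real N)\<^sup>2 * (\<Sum>\<omega>\<in>\<Omega>. \<Sum>j<N. \<Sum>l<N. cos ((real j - real l) * S \<omega>))"
    unfolding F_def sum_cos_sq_plus_sum_sin_sq by (rule sum_distrib_left[symmetric])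
  also have "(\<Sum>\<omega>\<in>\<Omega>. \<Sum>j<N. \<Sum>l<N. cos ((real j - real l) * S \<omega>))
      = (\<Sum>j<N. \<Sum>l<N. \<Sum>\<omega>\<in>\<Omega>. cos ((real j - real l) * S \<omega>))"
    by (subst sum.swap) (intro sum.cong refl sum.swap)
  finally show ?thesis .
qed

lemma sum_even_diff_le:
  fixes G :: "real \<Rightarrow> real"
  assumes even: "\<And>t. G (- t) = G t" and nonneg: "\<And>t. 0 \<le> G t" and "j < N"
  shows "(\<Sum>l<N. G (real j - real l)) \<le> 2 * (\<Sum>d<N. G (real d))"
proof -
  have reindex_le: "(\<Sum>l\<in>L. G (real (f l))) \<le> (\<Sum>d<N. G (real d))"
    if "inj_on f L" and "f ` L \<subseteq> {..<N}" for f :: "nat \<Rightarrow> nat" and L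
  proof -
    have "(\<Sum>l\<in>L. G (real (f l))) = (\<Sum>d\<in>f ` L. G (real d))"
      by (simp add: sum.reindex[OF that(1)])
    also have "\<dots> \<le> (\<Sum>d<N. G (real d))"
      using that(2) nonneg by (intro sum_mono2) auto
    finally show ?thesis .
  qed
  have split: "{..<N} = {..j} \<union> {j<..<N}"
    using assms(3) by auto
  have left: "(\<Sum>l\<le>j. G (real j - real l)) = (\<Sum>l\<le>j. G (real (j - l)))"
    by (intro sum.cong) (auto simp: of_nat_diff)
  have right: "(\<Sum>l\<in>{j<..<N}. G (real j - real l)) = (\<Sum>l\<in>{j<..<N}. G (real (l - j)))"
    using even[of "real l - real j" for l] by (intro sum.cong) (auto simp: of_nat_diff)
  have "(\<Sum>l<N. G (real j - real l))
      = (\<Sum>l\<le>j. G (real (j - l))) + (\<Sum>l\<in>{j<..<N}. G (real (l - j)))"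
    unfolding split left[symmetric] right[symmetric] by (rule sum.union_disjoint) auto
  also have "\<dots> \<le> (\<Sum>d<N. G (real d)) + (\<Sum>d<N. G (real d))"
    using assms(3) by (intro add_mono reindex_le) (auto simp: inj_on_def)
  finally show ?thesis
    by simp
qed

lemma sum_sum_prod_D_charfun_le:
  fixes n :: nat
  assumes "m \<ge> 1" and "(\<Sum>i<n. (x i)\<^sup>2) = 1" and "\<And>i. i < n \<Longrightarrow> (x i)\<^sup>2 \<le> 1 / 2"
    and "N \<le> m"
  shows "(\<Sum>j<N. \<Sum>l<N. \<Prod>i<n. D_charfun m ((real j - real l) * x i)) \<le> 30 * real N"
proof -
  define G where "G t = (\<Prod>i<n. \<bar>D_charfun m (t * x i)\<bar>)" for t
  have "(\<Sum>j<N. \<Sum>l<N. \<Prod>i<n. D_charfun m ((real j - real l) * x i))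
      \<le> (\<Sum>j<N. \<Sum>l<N. G (real j - real l))"
    unfolding G_def by (intro sum_mono) (simp add: abs_prod[symmetric])
  also have "\<dots> \<le> (\<Sum>j<N. 2 * (\<Sum>d<N. G (real d)))"
    using D_charfun_minus by (intro sum_mono sum_even_diff_le) (auto simp: G_def prod_nonneg)
  also have "\<dots> \<le> (\<Sum>j<N. 2 * 15)"
    unfolding G_def using sum_prod_abs_D_charfun_le[OF assms] by (intro sum_mono) simp
  finally show ?thesis
    by simp
qed

lemma nat_floor_inverse_bounds:
  fixes \<epsilon> :: real
  assumes "0 < \<epsilon>" and "\<epsilon> \<le> 1 / 2"
  defines "N \<equiv> nat \<lfloor>1 / \<epsilon>\<rfloor>"
  shows "0 < N" and "real N * \<epsilon> \<le> 1" and "1 / real N \<le> 2 * \<epsilon>"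
proof -
  have "2 \<le> 1 / \<epsilon>"
    using assms(1,2) by (simp add: field_simps)
  then have N: "real N \<le> 1 / \<epsilon>" "1 / \<epsilon> - 1 < real N"
    unfolding N_def by linarith+
  then show "real N * \<epsilon> \<le> 1"
    using assms(1) by (simp add: field_simps)
  have lower: "1 / (2 * \<epsilon>) < real N"
    using N(2) \<open>2 \<le> 1 / \<epsilon>\<close> by simp
  moreover have "0 < 1 / (2 * \<epsilon>)"
    using assms(1) by simp
  ultimately have "0 < real N"
    by linarith
  then show "0 < N"
    by simp
  have "1 < 2 * \<epsilon> * real N"
    using lower assms(1) by (simp add: divide_less_eq mult_ac)
  with \<open>0 < real N\<close> show "1 / real N \<le> 2 * \<epsilon>"
    by (simp add: divide_le_eq)
qed

lemma prob_abs_inner_le_spread: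
  fixes n :: nat
  assumes "m \<ge> 1" and "1 / real m \<le> \<epsilon>" and "\<epsilon> \<le> 1 / 2"
    and "(\<Sum>i<n. (x i)\<^sup>2) = 1" and "\<And>i. i < n \<Longrightarrow> (x i)\<^sup>2 \<le> 1 / 2"
  shows "measure_pmf.prob (Dn_pmf n m) {X. \<bar>\<Sum>i<n. X i * x i\<bar> \<le> \<epsilon>} \<le> 240 * \<epsilon>"
proof -
  define N where "N = nat \<lfloor>1 / \<epsilon>\<rfloor>"
  have "0 < 1 / real m"
    using assms(1) by simp
  with assms(2) have "\<epsilon> > 0"
    by linarith
  then have "N > 0" and "real N * \<epsilon> \<le> 1" and "1 / real N \<le> 2 * \<epsilon>"
    using nat_floor_inverse_bounds[OF _ assms(3)] unfolding N_def by auto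
  moreover have "1 \<le> real m * \<epsilon>"
    using assms(1,2) by (simp add: divide_le_eq mult.commute)
  ultimately have "N \<le> m"
    using \<open>\<epsilon> > 0\<close> by (metis mult_le_cancel_right order_trans of_nat_le_iff not_less)
  define S where "S X = (\<Sum>i<n. X i * x i)" for X :: "nat \<Rightarrow> real"
  define M where "M = (2 * real m + 1) ^ n"
  have M: "M > 0" "real (card (Dn_support n m)) = M"
    unfolding M_def using card_D_support[OF assms(1)] by (simp_all add: card_Dn_support add.commute)
  have "real (card (Dn_support n m \<inter> {X. \<bar>S X\<bar> \<le> \<epsilon>}))
      \<le> 4 / (real N)\<^sup>2 * (\<Sum>j<N. \<Sum>l<N. \<Sum>g\<in>Dn_support n m. cos ((real j - real l) * S g))"
    using card_abs_le_Halasz[OF finite_Dn_support \<open>N > 0\<close> \<open>real N * \<epsilon> \<le> 1\<close>] .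
  also have "\<dots> = 4 / (real N)\<^sup>2 * M * (\<Sum>j<N. \<Sum>l<N. \<Prod>i<n. D_charfun m ((real j - real l) * x i))"
    unfolding S_def M_def sum_cos_Dn_support[OF assms(1)] by (simp add: sum_distrib_left sum_divide_distrib mult_ac)
  also have "\<dots> \<le> 4 / (real N)\<^sup>2 * M * (30 * real N)"
    using sum_sum_prod_D_charfun_le[OF assms(1,4,5) \<open>N \<le> m\<close>] M by (intro mult_left_mono) auto
  also have "\<dots> = M * (120 * (1 / real N))"
    by (simp add: power2_eq_square)
  also have "\<dots> \<le> M * (240 * \<epsilon>)"
    using \<open>1 / real N \<le> 2 * \<epsilon>\<close> M by (intro mult_left_mono) auto
  finally show ?thesis
    unfolding prob_Dn_pmf S_def[symmetric] M(2) using M by (simp add: divide_le_eq mult.commute)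
qed

section \<open>A dominant coordinate\<close>

lemma card_int_set_le_diameter:
  fixes A :: "int set"
  assumes "finite A" and "\<And>a b. a \<in> A \<Longrightarrow> b \<in> A \<Longrightarrow> real_of_int (a - b) \<le> L" and "0 \<le> L"
  shows "real (card A) \<le> L + 1"
proof (cases "A = {}")
  case False
  have "A \<subseteq> {Min A..Max A}"
    using assms(1) by auto
  then have "card A \<le> nat (Max A - Min A + 1)"
    using card_mono[of "{Min A..Max A}" A] by simp
  moreover have "Min A \<le> Max A"
    using assms(1) False by (meson Max_ge Min_in)
  ultimately have "real (card A) \<le> real_of_int (Max A - Min A) + 1"
    by (metis of_nat_mono of_nat_nat add_nonneg_nonneg diff_ge_0_iff_ge of_int_1 of_int_add zero_le_one)
  moreover have "real_of_int (Max A - Min A) \<le> L"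
    using assms(1,2) False by simp
  ultimately show ?thesis
    by linarith
qed (use assms(3) in simp)

lemma card_D_support_slab_le:
  assumes "m \<ge> 1" and "c \<noteq> 0" and "0 \<le> \<epsilon>"
  shows "real (card {v \<in> D_support m. \<bar>v * c + r\<bar> \<le> \<epsilon>}) \<le> 2 * \<epsilon> * real m / \<bar>c\<bar> + 1"
proof -
  define A where "A = {a \<in> {-int m..int m}. \<bar>real_of_int a / real m * c + r\<bar> \<le> \<epsilon>}"
  have "{v \<in> D_support m. \<bar>v * c + r\<bar> \<le> \<epsilon>} = (\<lambda>a. real_of_int a / real m) ` A"
    unfolding A_def D_support_def by auto
  moreover have "finite A"
    unfolding A_def by (rule finite_subset[of _ "{-int m..int m}"]) auto
  ultimately have "card {v \<in> D_support m. \<bar>v * c + r\<bar> \<le> \<epsilon>} \<le> card A"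
    by (simp add: card_image_le)
  also have "real (card A) \<le> 2 * \<epsilon> * real m / \<bar>c\<bar> + 1"
  proof (rule card_int_set_le_diameter)
    fix a b assume "a \<in> A" "b \<in> A"
    then have "\<bar>(real_of_int a / real m * c + r) - (real_of_int b / real m * c + r)\<bar> \<le> 2 * \<epsilon>"
      unfolding A_def
      using abs_triangle_ineq4[of "real_of_int a / real m * c + r" "real_of_int b / real m * c + r"]
      by simp
    then have "\<bar>real_of_int (a - b) / real m * c\<bar> \<le> 2 * \<epsilon>"
      by (simp add: diff_divide_distrib left_diff_distrib)
    then show "real_of_int (a - b) \<le> 2 * \<epsilon> * real m / \<bar>c\<bar>"
      using assms(1,2) by (simp add: abs_mult abs_divide field_simps)
  qed (use assms \<open>finite A\<close> in auto)
  finally show ?thesis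
    by simp
qed

lemma card_Dn_support_slab_le:
  fixes n :: nat and x :: "nat \<Rightarrow> real"
  assumes "j < n" and fiber: "\<And>r. real (card {v \<in> D_support m. \<bar>v * x j + r\<bar> \<le> \<epsilon>}) \<le> K"
  shows "real (card (Dn_support n m \<inter> {X. \<bar>\<Sum>i<n. X i * x i\<bar> \<le> \<epsilon>}))
    \<le> real (card (D_support m)) ^ (n - 1) * K"
proof -
  define slab where "slab = Dn_support n m \<inter> {X. \<bar>\<Sum>i<n. X i * x i\<bar> \<le> \<epsilon>}"
  define S where "S X = (\<Sum>i\<in>{..<n} - {j}. X i * x i)" for X :: "nat \<Rightarrow> real"
  define \<Omega>' where "\<Omega>' = PiE_dflt ({..<n} - {j}) 0 (\<lambda>_. D_support m)"
  define F where "F h = {v \<in> D_support m. \<bar>v * x j + S h\<bar> \<le> \<epsilon>}" for h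
  define \<phi> where "\<phi> X = (X(j := 0), X j)" for X :: "nat \<Rightarrow> real"
  have fin_\<Omega>': "finite \<Omega>'"
    unfolding \<Omega>'_def by (intro finite_PiE_dflt) auto
  have fin_F: "finite (F h)" for h
    unfolding F_def by (rule finite_subset[of _ "D_support m"]) auto
  have "(\<Sum>i<n. X i * x i) = X j * x j + (\<Sum>i\<in>{..<n} - {j}. X i * x i)" for X :: "nat \<Rightarrow> real"
    using assms(1) by (subst sum.remove[of "{..<n}" j]) auto
  moreover have "S (X(j := 0)) = (\<Sum>i\<in>{..<n} - {j}. X i * x i)" for X
    unfolding S_def by (intro sum.cong) auto
  ultimately have "\<phi> ` slab \<subseteq> Sigma \<Omega>' F"
    using assms(1)
    by (auto simp: \<phi>_def slab_def Dn_support_def \<Omega>'_def F_def PiE_dflt_def)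
  moreover have "inj_on \<phi> slab"
  proof (rule inj_onI)
    fix X Y assume "\<phi> X = \<phi> Y"
    then have "X(j := 0) = Y(j := 0)" and "X j = Y j"
      by (simp_all add: \<phi>_def)
    then show "X = Y"
      by (metis fun_upd_triv fun_upd_upd)
  qed
  ultimately have "card slab \<le> card (Sigma \<Omega>' F)"
    using fin_\<Omega>' fin_F by (metis card_image card_mono finite_SigmaI)
  also have "\<dots> = (\<Sum>h\<in>\<Omega>'. card (F h))"
    using fin_\<Omega>' fin_F by (simp add: card_SigmaI)
  finally have "real (card slab) \<le> (\<Sum>h\<in>\<Omega>'. real (card (F h)))"
    by (simp only: of_nat_le_iff flip: of_nat_sum)
  also have "\<dots> \<le> real (card \<Omega>') * K"
    by (rule sum_bounded_above) (simp add: F_def fiber)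
  also have "card \<Omega>' = card (D_support m) ^ (n - 1)"
    unfolding \<Omega>'_def using assms(1) by (simp add: card_PiE_dflt)
  finally show ?thesis
    by (simp add: slab_def)
qed

lemma prob_abs_inner_le_big_coordinate:
  fixes n :: nat
  assumes "m \<ge> 1" and "1 / real m \<le> \<epsilon>" and "j < n" and "(x j)\<^sup>2 > 1 / 2"
  shows "measure_pmf.prob (Dn_pmf n m) {X. \<bar>\<Sum>i<n. X i * x i\<bar> \<le> \<epsilon>} \<le> 5 / 2 * \<epsilon>"
proof -
  define slab where "slab = Dn_support n m \<inter> {X. \<bar>\<Sum>i<n. X i * x i\<bar> \<le> \<epsilon>}"
  define K where "K = 5 * \<epsilon> * real m"
  have m: "real m > 0"
    using assms(1) by simp
  have "0 < 1 / real m"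
    using m by simp
  with assms(2) have \<epsilon>: "0 < \<epsilon>" "1 \<le> \<epsilon> * real m"
    using m by (linarith, simp add: divide_le_eq mult.commute)
  have "(1 / 2)\<^sup>2 < \<bar>x j\<bar>\<^sup>2"
    using assms(4) by (simp add: power_divide)
  then have xj: "1 / 2 < \<bar>x j\<bar>"
    by (rule power_less_imp_less_base) simp
  have fiber: "real (card {v \<in> D_support m. \<bar>v * x j + r\<bar> \<le> \<epsilon>}) \<le> K" for r
  proof -
    have "real (card {v \<in> D_support m. \<bar>v * x j + r\<bar> \<le> \<epsilon>}) \<le> 2 * \<epsilon> * real m / \<bar>x j\<bar> + 1"
      using assms(1) xj \<epsilon>(1) by (intro card_D_support_slab_le) auto
    also have "\<dots> \<le> 2 * \<epsilon> * real m / (1 / 2) + \<epsilon> * real m"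
      using xj \<epsilon> m by (intro add_mono divide_left_mono) auto
    finally show ?thesis
      unfolding K_def by simp
  qed
  obtain k where n: "n = Suc k"
    using assms(3) by (cases n) auto
  define P where "P = (2 * real m + 1) ^ k"
  have "P > 0"
    unfolding P_def using m by simp
  have "real (card slab) \<le> P * K"
    using card_Dn_support_slab_le[where x = x, OF assms(3) fiber] card_D_support[OF assms(1)]
    by (simp add: slab_def P_def n add.commute)
  moreover have card_Dn: "real (card (Dn_support n m)) = (2 * real m + 1) * P"
    using card_D_support[OF assms(1)] by (simp add: card_Dn_support P_def n add.commute algebra_simps)
  ultimately have "measure_pmf.prob (Dn_pmf n m) {X. \<bar>\<Sum>i<n. X i * x i\<bar> \<le> \<epsilon>}
      \<le> P * K / ((2 * real m + 1) * P)"
    unfolding prob_Dn_pmf slab_def[symmetric] card_Dn using m \<open>P > 0\<close> by (intro divide_right_mono) auto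
  also have "\<dots> = K / (2 * real m + 1)"
    using \<open>P > 0\<close> by simp
  also have "\<dots> \<le> 5 / 2 * \<epsilon>"
    unfolding K_def using m \<epsilon> by (simp add: divide_le_eq field_simps)
  finally show ?thesis .
qed

lemma prob_abs_inner_le:
  fixes n :: nat
  assumes "m \<ge> 1" and "1 / real m \<le> \<epsilon>" and "(\<Sum>i<n. (x i)\<^sup>2) = 1"
  shows "measure_pmf.prob (Dn_pmf n m) {X. \<bar>\<Sum>i<n. X i * x i\<bar> \<le> \<epsilon>} \<le> 240 * \<epsilon>"
proof -
  have "0 < 1 / real m"
    using assms(1) by simp
  with assms(2) have "0 < \<epsilon>"
    by linarith
  consider "1 / 2 < \<epsilon>" | j where "\<epsilon> \<le> 1 / 2" "j < n" "(x j)\<^sup>2 > 1 / 2"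
    | "\<epsilon> \<le> 1 / 2" "\<And>i. i < n \<Longrightarrow> (x i)\<^sup>2 \<le> 1 / 2"
    by (meson not_less)
  then show ?thesis
  proof cases
    case 1
    have "measure_pmf.prob (Dn_pmf n m) {X. \<bar>\<Sum>i<n. X i * x i\<bar> \<le> \<epsilon>} \<le> 1"
      by (rule measure_pmf.prob_le_1)
    with 1 show ?thesis
      by linarith
  next
    case (2 j)
    then have "measure_pmf.prob (Dn_pmf n m) {X. \<bar>\<Sum>i<n. X i * x i\<bar> \<le> \<epsilon>} \<le> 5 / 2 * \<epsilon>"
      by (intro prob_abs_inner_le_big_coordinate[OF assms(1,2)])
    with \<open>0 < \<epsilon>\<close> show ?thesis
      by linarith
  next
    case 3
    then show ?thesis
      using prob_abs_inner_le_spread[OF assms(1,2) _ assms(3)] by blast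
  qed
qed

theorem claim3p3:
  shows "\<exists>c>0. \<forall>(n::nat) (m::nat) (x::nat \<Rightarrow> real) (\<epsilon>::real).
    n \<ge> 1 \<longrightarrow> m \<ge> 2 \<longrightarrow> (\<Sum>i<n. (x i)\<^sup>2) = 1 \<longrightarrow>
    \<epsilon> \<ge> sqrt (log 2 (real m)) / real m \<longrightarrow>
    measure_pmf.prob (Dn_pmf n m) {X. \<bar>\<Sum>i<n. X i * x i\<bar> \<le> \<epsilon>} \<le> c * \<epsilon>"
proof (intro exI[of _ 240] conjI allI impI)
  fix n m :: nat and x :: "nat \<Rightarrow> real" and \<epsilon> :: real
  assume "m \<ge> 2" and unit: "(\<Sum>i<n. (x i)\<^sup>2) = 1" and \<epsilon>: "\<epsilon> \<ge> sqrt (log 2 (real m)) / real m"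
  have "log 2 2 \<le> log 2 (real m)"
    using \<open>m \<ge> 2\<close> by (subst log_le_cancel_iff) auto
  then have "1 \<le> log 2 (real m)"
    by simp
  then have "1 / real m \<le> sqrt (log 2 (real m)) / real m"
    by (intro divide_right_mono) auto
  with \<epsilon> have "1 / real m \<le> \<epsilon>"
    by linarith
  with \<open>m \<ge> 2\<close> unit show "measure_pmf.prob (Dn_pmf n m) {X. \<bar>\<Sum>i<n. X i * x i\<bar> \<le> \<epsilon>} \<le> 240 * \<epsilon>"
    by (intro prob_abs_inner_le) auto
qed simp

end
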